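(* Let $\mathcal{H}$ and $\mathcal{K}$ be graded connected Hopf algebras over a field $\Bbbk$ of characteristic different from $2$, let $\varphi:\mathcal{H}\to\Bbbk$ and $\psi:\mathcal{K}\to\Bbbk$ be characters, and let $\Phi:\mathcal{H}\to\mathcal{K}$ be a morphism of graded Hopf algebras with $\psi\circ\Phi=\varphi$. Then $\psi_+\circ\Phi=\varphi_+$ and $\psi_-\circ\Phi=\varphi_-$.
   Context: A character on a Hopf algebra $\mathcal{H}$ is an algebra morphism $\mathcal{H}\to\Bbbk$. The convolution product of linear functionals $\rho,\psi:\mathcal{H}\to\Bbbk$ is $\rho\psi=m\circ(\rho\otimes\psi)\circ\Delta$, where $\Delta$ is the coproduct of $\mathcal{H}$ and $m$ the multiplication of $\Bbbk$; characters form a group under convolution with unit the counit $\epsilon$. For a graded Hopf algebra and a functional $\varphi$, define $\bar\varphi(h)=(-1)^n\varphi(h)$ for $h$ homogeneous of degree $n$. A functional $\varphi$ is even if $\bar\varphi=\varphi$, and odd if it is convolution-invertible and $\bar\varphi=\varphi^{-1}$. On a graded connected Hopf algebra (degree-$0$ part equal to $\Bbbk\cdot 1$) every character $\varphi$ factors uniquely as $\varphi=\varphi_+\varphi_-$ (convolution product) with $\varphi_+$ an even character and $\varphi_-$ an odd character; $\varphi_+$ and $\varphi_-$ are called the even and odd parts of $\varphi$. *)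

theory Defs
  imports Complex_Main
begin

text \<open>A graded Hopf algebra over a field 'k, with underlying vector space given by the
type 'h (addition from the type class, scalar multiplication scl).
Elements of H (x) H are represented by finite Sweedler sums, i.e. lists of pairs;
since over a field elements of a tensor product are separated by pure tensors of linear
functionals, all axioms involving tensors are stated by pairing with such functionals.
The grading is given by the projections prj n onto the homogeneous components H_n.\<close>

record ('k, 'h) hopf =
  scl :: "'k \<Rightarrow> 'h \<Rightarrow> 'h"
  mlt :: "'h \<Rightarrow> 'h \<Rightarrow> 'h"
  one :: "'h"
  cop :: "'h \<Rightarrow> ('h \<times> 'h) list"
  cou :: "'h \<Rightarrow> 'k"
  ant :: "'h \<Rightarrow> 'h"
  prj :: "nat \<Rightarrow> 'h \<Rightarrow> 'h"

definition tpair :: "('h \<Rightarrow> 'k::comm_ring_1) \<Rightarrow> ('h \<Rightarrow> 'k) \<Rightarrow> ('h \<times> 'h) list \<Rightarrow> 'k" where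
  "tpair f g xs = sum_list (map (\<lambda>(a, b). f a * g b) xs)"

definition lfun :: "('k::field, 'h::ab_group_add) hopf \<Rightarrow> ('h \<Rightarrow> 'k) \<Rightarrow> bool" where
  "lfun H f \<longleftrightarrow> Vector_Spaces.linear (scl H) (*) f"

definition homog :: "('k, 'h) hopf \<Rightarrow> nat \<Rightarrow> 'h \<Rightarrow> bool" where
  "homog H n x \<longleftrightarrow> prj H n x = x"

definition graded_connected_hopf :: "('k::field, 'h::ab_group_add) hopf \<Rightarrow> bool" where
  "graded_connected_hopf H \<longleftrightarrow>
     \<comment> \<open>vector space\<close>
     vector_space (scl H) \<and>
     \<comment> \<open>associative unital algebra with bilinear product\<close>
     (\<forall>x. Vector_Spaces.linear (scl H) (scl H) (mlt H x)) \<and>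
     (\<forall>y. Vector_Spaces.linear (scl H) (scl H) (\<lambda>x. mlt H x y)) \<and>
     (\<forall>x y z. mlt H (mlt H x y) z = mlt H x (mlt H y z)) \<and>
     (\<forall>x. mlt H (one H) x = x \<and> mlt H x (one H) = x) \<and>
     \<comment> \<open>coalgebra: linear coproduct, coassociative, counit\<close>
     lfun H (cou H) \<and>
     (\<forall>f g x y c. lfun H f \<and> lfun H g \<longrightarrow>
        tpair f g (cop H (x + y)) = tpair f g (cop H x) + tpair f g (cop H y) \<and>
        tpair f g (cop H (scl H c x)) = c * tpair f g (cop H x)) \<and>
     (\<forall>f g k x. lfun H f \<and> lfun H g \<and> lfun H k \<longrightarrow>
        sum_list (map (\<lambda>(a, b). tpair f g (cop H a) * k b) (cop H x)) =
        sum_list (map (\<lambda>(a, b). f a * tpair g k (cop H b)) (cop H x))) \<and>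
     (\<forall>x. sum_list (map (\<lambda>(a, b). scl H (cou H a) b) (cop H x)) = x \<and>
          sum_list (map (\<lambda>(a, b). scl H (cou H b) a) (cop H x)) = x) \<and>
     \<comment> \<open>bialgebra: coproduct and counit are algebra morphisms\<close>
     (\<forall>f g x y. lfun H f \<and> lfun H g \<longrightarrow>
        tpair f g (cop H (mlt H x y)) =
        sum_list (map (\<lambda>(a, b). sum_list (map (\<lambda>(c, d). f (mlt H a c) * g (mlt H b d)) (cop H y)))
                      (cop H x))) \<and>
     (\<forall>f g. lfun H f \<and> lfun H g \<longrightarrow> tpair f g (cop H (one H)) = f (one H) * g (one H)) \<and>
     (\<forall>x y. cou H (mlt H x y) = cou H x * cou H y) \<and> cou H (one H) = 1 \<and>
     \<comment> \<open>antipode\<close>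
     Vector_Spaces.linear (scl H) (scl H) (ant H) \<and>
     (\<forall>x. sum_list (map (\<lambda>(a, b). mlt H (ant H a) b) (cop H x)) = scl H (cou H x) (one H) \<and>
          sum_list (map (\<lambda>(a, b). mlt H a (ant H b)) (cop H x)) = scl H (cou H x) (one H)) \<and>
     \<comment> \<open>grading: H is the direct sum of the images of the projections prj n\<close>
     (\<forall>n. Vector_Spaces.linear (scl H) (scl H) (prj H n)) \<and>
     (\<forall>n m x. prj H n (prj H m x) = (if n = m then prj H n x else 0)) \<and>
     (\<forall>x. finite {n. prj H n x \<noteq> 0} \<and> x = (\<Sum>n\<in>{n. prj H n x \<noteq> 0}. prj H n x)) \<and>
     \<comment> \<open>all structure maps respect the grading\<close>
     (\<forall>p q x y. homog H p x \<and> homog H q y \<longrightarrow> homog H (p + q) (mlt H x y)) \<and>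
     homog H 0 (one H) \<and>
     (\<forall>n p q x f g. homog H n x \<and> p + q \<noteq> n \<and> lfun H f \<and> lfun H g \<longrightarrow>
        tpair (f \<circ> prj H p) (g \<circ> prj H q) (cop H x) = 0) \<and>
     (\<forall>n x. homog H n x \<and> 0 < n \<longrightarrow> cou H x = 0) \<and>
     (\<forall>n x. homog H n x \<longrightarrow> homog H n (ant H x)) \<and>
     \<comment> \<open>connected: H_0 = k \<cdot> 1\<close>
     (\<forall>x. \<exists>c. prj H 0 x = scl H c (one H))"

definition graded_hopf_hom ::
  "('k::field, 'h::ab_group_add) hopf \<Rightarrow> ('k, 'g::ab_group_add) hopf \<Rightarrow> ('h \<Rightarrow> 'g) \<Rightarrow> bool" where
  "graded_hopf_hom H K \<Phi> \<longleftrightarrow>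
     Vector_Spaces.linear (scl H) (scl K) \<Phi> \<and>
     (\<forall>x y. \<Phi> (mlt H x y) = mlt K (\<Phi> x) (\<Phi> y)) \<and> \<Phi> (one H) = one K \<and>
     (\<forall>f g x. lfun K f \<and> lfun K g \<longrightarrow>
        tpair f g (cop K (\<Phi> x)) = tpair (f \<circ> \<Phi>) (g \<circ> \<Phi>) (cop H x)) \<and>
     (\<forall>x. cou K (\<Phi> x) = cou H x) \<and>
     (\<forall>x. \<Phi> (ant H x) = ant K (\<Phi> x)) \<and>
     (\<forall>n x. prj K n (\<Phi> x) = \<Phi> (prj H n x))"

definition conv :: "('k::comm_ring_1, 'h) hopf \<Rightarrow> ('h \<Rightarrow> 'k) \<Rightarrow> ('h \<Rightarrow> 'k) \<Rightarrow> 'h \<Rightarrow> 'k" where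
  "conv H \<rho> \<psi> x = tpair \<rho> \<psi> (cop H x)"

definition character :: "('k::field, 'h::ab_group_add) hopf \<Rightarrow> ('h \<Rightarrow> 'k) \<Rightarrow> bool" where
  "character H \<phi> \<longleftrightarrow> lfun H \<phi> \<and> (\<forall>x y. \<phi> (mlt H x y) = \<phi> x * \<phi> y) \<and> \<phi> (one H) = 1"

definition bar :: "('k::comm_ring_1, 'h::zero) hopf \<Rightarrow> ('h \<Rightarrow> 'k) \<Rightarrow> 'h \<Rightarrow> 'k" where
  "bar H \<phi> x = (\<Sum>n\<in>{n. prj H n x \<noteq> 0}. (-1) ^ n * \<phi> (prj H n x))"

definition even_fun :: "('k::field, 'h::ab_group_add) hopf \<Rightarrow> ('h \<Rightarrow> 'k) \<Rightarrow> bool" where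
  "even_fun H \<phi> \<longleftrightarrow> bar H \<phi> = \<phi>"

definition odd_fun :: "('k::field, 'h::ab_group_add) hopf \<Rightarrow> ('h \<Rightarrow> 'k) \<Rightarrow> bool" where
  "odd_fun H \<phi> \<longleftrightarrow> conv H \<phi> (bar H \<phi>) = cou H \<and> conv H (bar H \<phi>) \<phi> = cou H"

definition even_part :: "('k::field, 'h::ab_group_add) hopf \<Rightarrow> ('h \<Rightarrow> 'k) \<Rightarrow> 'h \<Rightarrow> 'k" where
  "even_part H \<phi> = (THE p. character H p \<and> even_fun H p \<and>
      (\<exists>m. character H m \<and> odd_fun H m \<and> \<phi> = conv H p m))"

definition odd_part :: "('k::field, 'h::ab_group_add) hopf \<Rightarrow> ('h \<Rightarrow> 'k) \<Rightarrow> 'h \<Rightarrow> 'k" where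
  "odd_part H \<phi> = (THE m. character H m \<and> odd_fun H m \<and>
      (\<exists>p. character H p \<and> even_fun H p \<and> \<phi> = conv H p m))"

end

theory Submission
  imports Defs
begin

text \<open>For a character \<open>\<phi>\<close>, the character \<open>\<chi> = bar \<phi>\<inverse> \<phi>\<close> is odd. It has a convolution
  square root \<open>\<phi>\<^sub>-\<close>, built degree by degree (this is where \<open>2 \<noteq> 0\<close> is used); \<open>\<phi>\<^sub>-\<close> is odd and
  \<open>\<phi>\<^sub>+ = \<phi> \<phi>\<^sub>-\<inverse>\<close> is even. Conversely \<open>\<phi> = \<phi>\<^sub>+ \<phi>\<^sub>-\<close> forces \<open>\<phi>\<^sub>-\<^sup>2 = bar \<phi>\<inverse> \<phi>\<close>, and square roots
  taking the value \<open>1\<close> at \<open>1\<close> are unique, again by induction on the degree; so the factorization is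
  unique. Inverses are composition with the antipode. That square roots of characters and
  \<open>\<phi> \<circ> ant H\<close> are again multiplicative follows from the same degree induction applied to bilinear
  forms, i.e. to functionals on \<open>H \<otimes> H\<close>.

  A graded Hopf morphism \<open>\<Phi>\<close> commutes with convolution, with \<open>bar\<close> and with the counit, so it
  carries the factorization \<open>\<psi> = \<psi>\<^sub>+ \<psi>\<^sub>-\<close> to a factorization of \<open>\<phi> = \<psi> \<circ> \<Phi>\<close> into an even and an odd
  character, which by uniqueness is \<open>\<phi>\<^sub>+ \<phi>\<^sub>-\<close>.\<close>

lemma vector_space_mult: "vector_space ((*) :: 'k::field \<Rightarrow> 'k \<Rightarrow> 'k)"
  by unfold_locales (auto simp: algebra_simps)

lemma sum_list_map_sum:
  "sum_list (map (\<lambda>(a, b). \<Sum>i\<in>S. F i a b) xs) = (\<Sum>i\<in>S. sum_list (map (\<lambda>(a, b). F i a b) xs))"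
  by (induction xs) (auto simp: sum.distrib)

lemma sum_list_map_swap:
  "sum_list (map (\<lambda>(a, b). sum_list (map (\<lambda>(c, d). F a b c d) ys)) xs) =
   sum_list (map (\<lambda>(c, d). sum_list (map (\<lambda>(a, b). F a b c d :: 'a::comm_monoid_add) xs)) ys)"
  by (induction xs) (auto simp: sum_list_addf case_prod_beta')

lemma sum_list_map_mult_sum_list:
  "sum_list (map (\<lambda>(a, b). sum_list (map (\<lambda>(c, d). P a b * Q c d) ys)) xs) =
   sum_list (map (\<lambda>(a, b). P a b) xs) * (sum_list (map (\<lambda>(c, d). Q c d) ys) :: 'a::comm_semiring_0)"
  by (induction xs) (auto simp: sum_list_const_mult distrib_right case_prod_beta')

lemma lfun_module_hom: "lfun H f \<Longrightarrow> module_hom (scl H) (*) f"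
  by (simp add: lfun_def linear_iff_module_hom)

lemma lfun_add: "lfun H f \<Longrightarrow> f (x + y) = f x + f y"
  using module_hom.add[OF lfun_module_hom] by blast

lemma lfun_scale: "lfun H f \<Longrightarrow> f (scl H c x) = c * f x"
  using module_hom.scale[OF lfun_module_hom] by blast

lemma lfun_zero: "lfun H f \<Longrightarrow> f 0 = 0"
  using module_hom.zero[OF lfun_module_hom] by blast

lemma lfun_sum: "lfun H f \<Longrightarrow> f (sum g S) = (\<Sum>a\<in>S. f (g a))"
  using module_hom.sum[OF lfun_module_hom] by blast

lemma lfun_sum_list: "lfun H f \<Longrightarrow> f (sum_list (map g xs)) = sum_list (map (\<lambda>a. f (g a)) xs)"
  by (induction xs) (auto simp: lfun_add lfun_zero)

lemma lfun_comp: "lfun H f \<Longrightarrow> Vector_Spaces.linear (scl H) (scl H) h \<Longrightarrow> lfun H (f \<circ> h)"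
  unfolding lfun_def by (rule Vector_Spaces.linear_compose)

lemma tpair_mult_left: "tpair (\<lambda>a. c * f a) g xs = c * tpair f g xs"
  unfolding tpair_def by (induction xs) (auto simp: algebra_simps)

lemma tpair_mult_right: "tpair f (\<lambda>b. c * g b) xs = c * tpair f g xs"
  unfolding tpair_def by (induction xs) (auto simp: algebra_simps)

lemma character_lfun: "character H f \<Longrightarrow> lfun H f"
  by (simp add: character_def)

lemma character_mlt: "character H f \<Longrightarrow> f (mlt H x y) = f x * f y"
  by (simp add: character_def)

lemma character_one: "character H f \<Longrightarrow> f (one H) = 1"
  by (simp add: character_def)

definition graded_sum :: "('k, 'h::zero) hopf \<Rightarrow> (nat \<Rightarrow> 'h \<Rightarrow> 'k::comm_monoid_add) \<Rightarrow> 'h \<Rightarrow> 'k" where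
  "graded_sum H F x = (\<Sum>n\<in>{n. prj H n x \<noteq> 0}. F n (prj H n x))"

lemma bar_eq_graded_sum: "bar H f = graded_sum H (\<lambda>n y. (-1) ^ n * f y)"
  by (simp add: fun_eq_iff bar_def graded_sum_def)

locale gc_hopf =
  fixes H :: "('k::field, 'h::ab_group_add) hopf"
  assumes graded_connected: "graded_connected_hopf H"
begin

lemma
  scl_vector_space: "vector_space (scl H)" and
  left_mult_linear: "Vector_Spaces.linear (scl H) (scl H) (mlt H x)" and
  right_mult_linear: "Vector_Spaces.linear (scl H) (scl H) (\<lambda>x. mlt H x y)" and
  one_mlt: "mlt H (one H) x = x" and
  cou_lfun: "lfun H (cou H)" and
  cop_add: "lfun H f \<Longrightarrow> lfun H g \<Longrightarrow>
    tpair f g (cop H (x + y)) = tpair f g (cop H x) + tpair f g (cop H y)" and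
  cop_scale: "lfun H f \<Longrightarrow> lfun H g \<Longrightarrow> tpair f g (cop H (scl H c x)) = c * tpair f g (cop H x)" and
  cop_coassoc: "lfun H f \<Longrightarrow> lfun H g \<Longrightarrow> lfun H k \<Longrightarrow>
    sum_list (map (\<lambda>(a, b). tpair f g (cop H a) * k b) (cop H x)) =
    sum_list (map (\<lambda>(a, b). f a * tpair g k (cop H b)) (cop H x))" and
  cop_counit_left: "sum_list (map (\<lambda>(a, b). scl H (cou H a) b) (cop H x)) = x" and
  cop_counit_right: "sum_list (map (\<lambda>(a, b). scl H (cou H b) a) (cop H x)) = x" and
  cop_mlt: "lfun H f \<Longrightarrow> lfun H g \<Longrightarrow> tpair f g (cop H (mlt H x y)) =
    sum_list (map (\<lambda>(a, b). sum_list (map (\<lambda>(c, d). f (mlt H a c) * g (mlt H b d)) (cop H y))) (cop H x))" and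
  cop_one: "lfun H f \<Longrightarrow> lfun H g \<Longrightarrow> tpair f g (cop H (one H)) = f (one H) * g (one H)" and
  cou_mlt: "cou H (mlt H x y) = cou H x * cou H y" and
  cou_one: "cou H (one H) = 1" and
  ant_linear: "Vector_Spaces.linear (scl H) (scl H) (ant H)" and
  ant_left: "sum_list (map (\<lambda>(a, b). mlt H (ant H a) b) (cop H x)) = scl H (cou H x) (one H)" and
  ant_right: "sum_list (map (\<lambda>(a, b). mlt H a (ant H b)) (cop H x)) = scl H (cou H x) (one H)" and
  prj_linear: "Vector_Spaces.linear (scl H) (scl H) (prj H n)" and
  prj_prj: "prj H n (prj H m x) = (if n = m then prj H n x else 0)" and
  prj_support_finite: "finite {n. prj H n x \<noteq> 0}" and
  sum_prj: "x = (\<Sum>n\<in>{n. prj H n x \<noteq> 0}. prj H n x)" and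
  homog_mlt: "homog H p x \<Longrightarrow> homog H q y \<Longrightarrow> homog H (p + q) (mlt H x y)" and
  homog_one: "homog H 0 (one H)" and
  cop_homog: "homog H n x \<Longrightarrow> p + q \<noteq> n \<Longrightarrow> lfun H f \<Longrightarrow> lfun H g \<Longrightarrow>
    tpair (f \<circ> prj H p) (g \<circ> prj H q) (cop H x) = 0" and
  cou_homog: "homog H n x \<Longrightarrow> 0 < n \<Longrightarrow> cou H x = 0" and
  prj_0_connected: "\<exists>c. prj H 0 x = scl H c (one H)"
  using graded_connected unfolding graded_connected_hopf_def by (simp_all only:)

subsection \<open>Linear functionals and the grading\<close>

lemma scl_zero [simp]: "scl H c 0 = 0"
  using scl_vector_space module.scale_zero_right module_iff_vector_space by metis

lemma lfunI:
  assumes "\<And>x y. f (x + y) = f x + f y" and "\<And>c x. f (scl H c x) = c * f x"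
  shows "lfun H f"
  unfolding lfun_def Vector_Spaces.linear_iff using assms scl_vector_space vector_space_mult by blast

lemma lfun_const_mult: "lfun H f \<Longrightarrow> lfun H (\<lambda>x. c * f x)"
  by (rule lfunI) (auto simp: lfun_add lfun_scale algebra_simps)

lemma lfun_mult_const: "lfun H f \<Longrightarrow> lfun H (\<lambda>x. f x * c)"
  by (rule lfunI) (auto simp: lfun_add lfun_scale algebra_simps)

lemma lfun_plus: "lfun H f \<Longrightarrow> lfun H g \<Longrightarrow> lfun H (\<lambda>x. f x + g x)"
  by (rule lfunI) (auto simp: lfun_add lfun_scale algebra_simps)

lemma lfun_minus: "lfun H f \<Longrightarrow> lfun H g \<Longrightarrow> lfun H (\<lambda>x. f x - g x)"
  by (rule lfunI) (auto simp: lfun_add lfun_scale algebra_simps)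

lemma lfun_comp_prj: "lfun H f \<Longrightarrow> lfun H (f \<circ> prj H n)"
  by (rule lfun_comp[OF _ prj_linear])

lemma lfun_comp_ant: "lfun H f \<Longrightarrow> lfun H (f \<circ> ant H)"
  by (rule lfun_comp[OF _ ant_linear])

lemma lfun_left_mult: "lfun H f \<Longrightarrow> lfun H (\<lambda>x. f (mlt H c x))"
  using lfun_comp[OF _ left_mult_linear] by (simp add: comp_def)

lemma lfun_right_mult: "lfun H f \<Longrightarrow> lfun H (\<lambda>x. f (mlt H x c))"
  using lfun_comp[OF _ right_mult_linear] by (simp add: comp_def)

lemma prj_add: "prj H n (x + y) = prj H n x + prj H n y"
  using module_hom.add prj_linear linear_iff_module_hom by metis

lemma prj_scale: "prj H n (scl H c x) = scl H c (prj H n x)"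
  using module_hom.scale prj_linear linear_iff_module_hom by metis

lemma prj_zero [simp]: "prj H n 0 = 0"
  using module_hom.zero prj_linear linear_iff_module_hom by metis

lemma prj_idem [simp]: "prj H n (prj H n x) = prj H n x"
  by (simp add: prj_prj)

lemma homog_prj: "homog H n (prj H n x)"
  by (simp add: homog_def)

lemma prj_vanishes_above:
  obtains B where "\<And>n. B \<le> n \<Longrightarrow> prj H n x = 0"
proof -
  obtain B where "\<forall>n\<in>{n. prj H n x \<noteq> 0}. n < B"
    using prj_support_finite finite_nat_set_iff_bounded by blast
  then have "\<And>n. B \<le> n \<Longrightarrow> prj H n x = 0" by (meson leD mem_Collect_eq)
  then show ?thesis by (rule that)
qed

lemma prj_list_vanishes_above: "\<exists>B. \<forall>(a, b)\<in>set xs. \<forall>n\<ge>B. prj H n a = 0 \<and> prj H n b = 0"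
proof (induction xs)
  case Nil
  then show ?case by simp
next
  case (Cons ab xs)
  obtain B where B: "\<forall>(a, b)\<in>set xs. \<forall>n\<ge>B. prj H n a = 0 \<and> prj H n b = 0"
    using Cons.IH by blast
  obtain B1 where B1: "\<And>n. B1 \<le> n \<Longrightarrow> prj H n (fst ab) = 0" using prj_vanishes_above by blast
  obtain B2 where B2: "\<And>n. B2 \<le> n \<Longrightarrow> prj H n (snd ab) = 0" using prj_vanishes_above by blast
  show ?case
    using B B1 B2 by (intro exI[of _ "max B (max B1 B2)"]) (auto simp: case_prod_beta)
qed

lemma lfun_eq_sum_prj:
  assumes "lfun H f" and "\<And>n. B \<le> n \<Longrightarrow> prj H n x = 0"
  shows "f x = (\<Sum>n<B. f (prj H n x))"
proof -
  have "x = (\<Sum>n<B. prj H n x)"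
    using sum.mono_neutral_right[of "{..<B}" "{n. prj H n x \<noteq> 0}" "\<lambda>n. prj H n x"] sum_prj[of x]
      assms(2) by (fastforce simp: not_le)
  then show ?thesis using lfun_sum[OF assms(1)] by metis
qed

lemma lfun_eqI_prj:
  assumes "lfun H f" and "lfun H g" and "\<And>n x. f (prj H n x) = g (prj H n x)"
  shows "f = g"
proof
  fix x
  obtain B where "\<And>n. B \<le> n \<Longrightarrow> prj H n x = 0" using prj_vanishes_above by blast
  then have "f x = (\<Sum>n<B. f (prj H n x))" and "g x = (\<Sum>n<B. g (prj H n x))"
    using lfun_eq_sum_prj assms(1,2) by blast+
  then show "f x = g x" using assms(3) by simp
qed

lemma prj_0: "prj H 0 x = scl H (cou H x) (one H)"
proof -
  obtain c where c: "prj H 0 x = scl H c (one H)" using prj_0_connected by blast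
  obtain B where B: "\<And>n. B \<le> n \<Longrightarrow> prj H n x = 0" using prj_vanishes_above by blast
  have "cou H x = (\<Sum>n<Suc B. cou H (prj H n x))"
    by (rule lfun_eq_sum_prj[OF cou_lfun]) (simp add: B)
  also have "\<dots> = cou H (prj H 0 x)"
    by (simp only: sum.lessThan_Suc_shift) (simp add: cou_homog[OF homog_prj])
  also have "\<dots> = c" using c lfun_scale[OF cou_lfun] cou_one by simp
  finally show ?thesis using c by simp
qed

lemma lfun_prj_0: "lfun H f \<Longrightarrow> f (prj H 0 x) = f (one H) * cou H x"
  by (simp add: prj_0 lfun_scale)

lemma graded_sum_eq_sum:
  assumes "\<And>n. lfun H (F n)" and "\<And>n. B \<le> n \<Longrightarrow> prj H n x = 0"
  shows "graded_sum H F x = (\<Sum>n<B. F n (prj H n x))"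
  unfolding graded_sum_def
  by (rule sum.mono_neutral_left) (use assms in \<open>auto simp: lfun_zero[OF assms(1)] not_le[symmetric]\<close>)

lemma graded_sum_lfun:
  assumes F: "\<And>n. lfun H (F n)"
  shows "lfun H (graded_sum H F)"
proof (rule lfunI)
  fix x y
  obtain B1 where B1: "\<And>n. B1 \<le> n \<Longrightarrow> prj H n x = 0" using prj_vanishes_above by blast
  obtain B2 where B2: "\<And>n. B2 \<le> n \<Longrightarrow> prj H n y = 0" using prj_vanishes_above by blast
  let ?B = "max B1 B2"
  have "graded_sum H F (x + y) = (\<Sum>n<?B. F n (prj H n (x + y)))"
    by (rule graded_sum_eq_sum[OF F]) (simp add: B1 B2 prj_add)
  also have "\<dots> = (\<Sum>n<?B. F n (prj H n x)) + (\<Sum>n<?B. F n (prj H n y))"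
    by (simp only: prj_add lfun_add[OF F] sum.distrib)
  also have "\<dots> = graded_sum H F x + graded_sum H F y"
    using graded_sum_eq_sum[OF F, of ?B x] graded_sum_eq_sum[OF F, of ?B y] B1 B2 by simp
  finally show "graded_sum H F (x + y) = graded_sum H F x + graded_sum H F y" .
next
  fix c x
  obtain B where B: "\<And>n. B \<le> n \<Longrightarrow> prj H n x = 0" using prj_vanishes_above by blast
  have "graded_sum H F (scl H c x) = (\<Sum>n<B. F n (prj H n (scl H c x)))"
    by (rule graded_sum_eq_sum[OF F]) (simp add: B prj_scale)
  also have "\<dots> = c * (\<Sum>n<B. F n (prj H n x))"
    by (simp only: prj_scale lfun_scale[OF F] sum_distrib_left)
  also have "\<dots> = c * graded_sum H F x"
    using graded_sum_eq_sum[OF F, of B x] B by simp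
  finally show "graded_sum H F (scl H c x) = c * graded_sum H F x" .
qed

lemma graded_sum_prj:
  assumes "\<And>n. lfun H (F n)"
  shows "graded_sum H F (prj H n x) = F n (prj H n x)"
proof -
  have "graded_sum H F (prj H n x) = (\<Sum>k\<in>{n}. F k (prj H k (prj H n x)))"
    unfolding graded_sum_def
    by (rule sum.mono_neutral_left) (auto simp: prj_prj lfun_zero[OF assms] split: if_splits)
  then show ?thesis by simp
qed

lemma tpair_cou_left:
  assumes g: "lfun H g"
  shows "tpair (cou H) g (cop H x) = g x"
proof -
  have "tpair (cou H) g xs = g (sum_list (map (\<lambda>(a, b). scl H (cou H a) b) xs))" for xs
    unfolding tpair_def by (induction xs) (auto simp: lfun_add[OF g] lfun_scale[OF g] lfun_zero[OF g])
  then show ?thesis by (simp add: cop_counit_left)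
qed

lemma tpair_cou_right:
  assumes f: "lfun H f"
  shows "tpair f (cou H) (cop H x) = f x"
proof -
  have "tpair f (cou H) xs = f (sum_list (map (\<lambda>(a, b). scl H (cou H b) a) xs))" for xs
    unfolding tpair_def
    by (induction xs) (auto simp: lfun_add[OF f] lfun_scale[OF f] lfun_zero[OF f] mult.commute)
  then show ?thesis by (simp add: cop_counit_right)
qed

lemma tpair_eq_sum_prj:
  assumes f: "lfun H f" and g: "lfun H g"
    and B: "\<forall>(a, b)\<in>set xs. \<forall>n\<ge>B. prj H n a = 0 \<and> prj H n b = 0"
  shows "tpair f g xs = (\<Sum>p<B. \<Sum>q<B. tpair (f \<circ> prj H p) (g \<circ> prj H q) xs)"
proof -
  have "f a * g b = (\<Sum>p<B. \<Sum>q<B. f (prj H p a) * g (prj H q b))" if "(a, b) \<in> set xs" for a b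
  proof -
    have fa: "f a = (\<Sum>p<B. f (prj H p a))" and gb: "g b = (\<Sum>q<B. g (prj H q b))"
      using B that lfun_eq_sum_prj[OF f, of B a] lfun_eq_sum_prj[OF g, of B b] by auto
    show ?thesis by (simp only: fa gb sum_product)
  qed
  then have "tpair f g xs = sum_list (map (\<lambda>(a, b). \<Sum>p<B. \<Sum>q<B. f (prj H p a) * g (prj H q b)) xs)"
    unfolding tpair_def by (intro arg_cong[where f = sum_list] map_cong) auto
  also have "\<dots> = (\<Sum>p<B. \<Sum>q<B. tpair (f \<circ> prj H p) (g \<circ> prj H q) xs)"
    by (simp only: sum_list_map_sum tpair_def comp_def)
  finally show ?thesis .
qed

lemma tpair_cop_prj:
  assumes f: "lfun H f" and g: "lfun H g"
  shows "tpair f g (cop H (prj H n x)) =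
    (\<Sum>p\<le>n. tpair (f \<circ> prj H p) (g \<circ> prj H (n - p)) (cop H (prj H n x)))"
proof -
  define T where "T p q = tpair (f \<circ> prj H p) (g \<circ> prj H q) (cop H (prj H n x))" for p q
  obtain B0 where B0: "\<forall>(a, b)\<in>set (cop H (prj H n x)). \<forall>k\<ge>B0. prj H k a = 0 \<and> prj H k b = 0"
    using prj_list_vanishes_above by blast
  define B where "B = max B0 (Suc n)"
  have "tpair f g (cop H (prj H n x)) = (\<Sum>p<B. \<Sum>q<B. T p q)"
    unfolding T_def by (rule tpair_eq_sum_prj[OF f g]) (use B0 in \<open>auto simp: B_def\<close>)
  also have "\<dots> = (\<Sum>p<B. if p \<le> n then T p (n - p) else 0)"
  proof (rule sum.cong[OF refl])
    fix p
    have "(\<Sum>q<B. T p q) = (\<Sum>q<B. if q = n - p \<and> p \<le> n then T p q else 0)"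
      by (rule sum.cong[OF refl]) (auto simp: T_def intro!: cop_homog[OF homog_prj _ f g])
    also have "\<dots> = (if p \<le> n then T p (n - p) else 0)"
      by (auto simp: B_def)
    finally show "(\<Sum>q<B. T p q) = (if p \<le> n then T p (n - p) else 0)" .
  qed
  also have "\<dots> = (\<Sum>p\<in>{..<B} \<inter> {..n}. T p (n - p))"
    by (subst sum.inter_restrict) (auto simp: atMost_iff)
  also have "{..<B} \<inter> {..n} = {..n}"
    by (auto simp: B_def)
  finally show ?thesis unfolding T_def .
qed

lemma tpair_prj_0_left:
  assumes f: "lfun H f" and g: "lfun H g"
  shows "tpair (f \<circ> prj H 0) g (cop H x) = f (one H) * g x"
proof -
  have "f \<circ> prj H 0 = (\<lambda>a. f (one H) * cou H a)"
    by (simp add: fun_eq_iff lfun_prj_0[OF f])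
  then show ?thesis by (simp add: tpair_mult_left tpair_cou_left[OF g])
qed

lemma tpair_prj_0_right:
  assumes f: "lfun H f" and g: "lfun H g"
  shows "tpair f (g \<circ> prj H 0) (cop H x) = f x * g (one H)"
proof -
  have "g \<circ> prj H 0 = (\<lambda>a. g (one H) * cou H a)"
    by (simp add: fun_eq_iff lfun_prj_0[OF g])
  then have "tpair f (g \<circ> prj H 0) (cop H x) = g (one H) * f x"
    by (simp add: tpair_mult_right tpair_cou_right[OF f])
  then show ?thesis by (simp only: mult.commute)
qed

lemma tpair_cop_prj_split:
  assumes f: "lfun H f" and g: "lfun H g" and n: "0 < n"
  shows "tpair f g (cop H (prj H n x)) = f (one H) * g (prj H n x) + f (prj H n x) * g (one H)
    + (\<Sum>p\<in>{0<..<n}. tpair (f \<circ> prj H p) (g \<circ> prj H (n - p)) (cop H (prj H n x)))"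
proof -
  have "{..n} = insert 0 (insert n {0<..<n})" using n by auto
  then show ?thesis
    using n tpair_prj_0_left[OF f lfun_comp_prj[OF g], of n "prj H n x"]
      tpair_prj_0_right[OF lfun_comp_prj[OF f] g, of n "prj H n x"]
    by (simp add: tpair_cop_prj[OF f g] add.assoc)
qed

subsection \<open>Convolution and the involution \<open>bar\<close>\<close>

lemma conv_lfun: "lfun H f \<Longrightarrow> lfun H g \<Longrightarrow> lfun H (conv H f g)"
  by (rule lfunI) (simp_all add: conv_def cop_add cop_scale)

lemma conv_assoc:
  assumes f: "lfun H f" and g: "lfun H g" and h: "lfun H h"
  shows "conv H (conv H f g) h = conv H f (conv H g h)"
proof
  fix x
  have "conv H (conv H f g) h x = sum_list (map (\<lambda>(a, b). tpair f g (cop H a) * h b) (cop H x))"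
    by (simp add: conv_def tpair_def[of "conv H f g"])
  also have "\<dots> = sum_list (map (\<lambda>(a, b). f a * tpair g h (cop H b)) (cop H x))"
    by (rule cop_coassoc[OF f g h])
  also have "\<dots> = conv H f (conv H g h) x"
    by (simp add: conv_def tpair_def[of f "conv H g h"])
  finally show "conv H (conv H f g) h x = conv H f (conv H g h) x" .
qed

lemma conv_cou_left: "lfun H g \<Longrightarrow> conv H (cou H) g = g"
  by (simp add: fun_eq_iff conv_def tpair_cou_left)

lemma conv_cou_right: "lfun H f \<Longrightarrow> conv H f (cou H) = f"
  by (simp add: fun_eq_iff conv_def tpair_cou_right)

lemma conv_inverse_unique:
  assumes a: "lfun H a" and b: "lfun H b" and c: "lfun H c"
    and "conv H a b = cou H" and "conv H c a = cou H"
  shows "b = c"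
proof -
  have "b = conv H (conv H c a) b" using assms conv_cou_left[OF b] by simp
  also have "\<dots> = conv H c (conv H a b)" by (rule conv_assoc[OF c a b])
  also have "\<dots> = c" using assms conv_cou_right[OF c] by simp
  finally show ?thesis .
qed

lemma conv_one: "lfun H f \<Longrightarrow> lfun H g \<Longrightarrow> conv H f g (one H) = f (one H) * g (one H)"
  by (simp add: conv_def cop_one)

lemma conv_character:
  assumes f: "character H f" and g: "character H g"
  shows "character H (conv H f g)"
  unfolding character_def
proof (intro conjI allI)
  note fg = character_lfun[OF f] character_lfun[OF g]
  show "lfun H (conv H f g)" by (rule conv_lfun[OF fg])
  show "conv H f g (one H) = 1" by (simp add: conv_one[OF fg] character_one f g)
  fix x y
  have "conv H f g (mlt H x y) = sum_list (map (\<lambda>(a, b).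
      sum_list (map (\<lambda>(c, d). (f a * g b) * (f c * g d)) (cop H y))) (cop H x))"
    by (simp add: conv_def cop_mlt[OF fg] character_mlt f g mult_ac)
  also have "\<dots> = conv H f g x * conv H f g y"
    by (simp only: sum_list_map_mult_sum_list conv_def tpair_def)
  finally show "conv H f g (mlt H x y) = conv H f g x * conv H f g y" .
qed

lemma conv_ant_right:
  assumes f: "character H f"
  shows "conv H f (f \<circ> ant H) = cou H"
proof
  fix x
  have "conv H f (f \<circ> ant H) x = f (sum_list (map (\<lambda>(a, b). mlt H a (ant H b)) (cop H x)))"
    by (simp add: conv_def tpair_def character_mlt[OF f] lfun_sum_list[OF character_lfun[OF f]]
        case_prod_beta')
  then show "conv H f (f \<circ> ant H) x = cou H x"
    by (simp add: ant_right lfun_scale[OF character_lfun[OF f]] character_one[OF f])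
qed

lemma conv_ant_left:
  assumes f: "character H f"
  shows "conv H (f \<circ> ant H) f = cou H"
proof
  fix x
  have "conv H (f \<circ> ant H) f x = f (sum_list (map (\<lambda>(a, b). mlt H (ant H a) b) (cop H x)))"
    by (simp add: conv_def tpair_def character_mlt[OF f] lfun_sum_list[OF character_lfun[OF f]]
        case_prod_beta')
  then show "conv H (f \<circ> ant H) f x = cou H x"
    by (simp add: ant_left lfun_scale[OF character_lfun[OF f]] character_one[OF f])
qed

lemma character_ant_one:
  assumes f: "character H f"
  shows "f (ant H (one H)) = 1"
proof -
  have "conv H (f \<circ> ant H) f (one H) = 1"
    using conv_ant_left[OF f] cou_one by simp
  then show ?thesis
    using conv_one[OF lfun_comp_ant[OF character_lfun[OF f]] character_lfun[OF f]] character_one[OF f]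
    by simp
qed

lemma conv_ant_conv_cancel:
  assumes m: "character H m" and g: "lfun H g"
  shows "conv H (m \<circ> ant H) (conv H m g) = g"
  using conv_assoc[OF lfun_comp_ant[OF character_lfun[OF m]] character_lfun[OF m] g]
    conv_ant_left[OF m] conv_cou_left[OF g] by simp

lemma conv_conv_ant_cancel:
  assumes m: "character H m" and g: "lfun H g"
  shows "conv H m (conv H (m \<circ> ant H) g) = g"
  using conv_assoc[OF character_lfun[OF m] lfun_comp_ant[OF character_lfun[OF m]] g]
    conv_ant_right[OF m] conv_cou_left[OF g] by simp

lemma conv_conv_ant_cancel_right:
  assumes m: "character H m" and g: "lfun H g"
  shows "conv H (conv H g m) (m \<circ> ant H) = g"
  using conv_assoc[OF g character_lfun[OF m] lfun_comp_ant[OF character_lfun[OF m]]]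
    conv_ant_right[OF m] conv_cou_right[OF g] by simp

lemma bar_lfun: "lfun H f \<Longrightarrow> lfun H (bar H f)"
  unfolding bar_eq_graded_sum by (rule graded_sum_lfun) (rule lfun_const_mult)

lemma bar_prj: "lfun H f \<Longrightarrow> bar H f (prj H n x) = (-1) ^ n * f (prj H n x)"
  using graded_sum_prj[of "\<lambda>n y. (-1) ^ n * f y" n x] lfun_const_mult[of f]
  by (simp add: bar_eq_graded_sum)

lemma bar_homog: "lfun H f \<Longrightarrow> homog H n x \<Longrightarrow> bar H f x = (-1) ^ n * f x"
  using bar_prj[of f n x] by (simp add: homog_def)

lemma bar_bar: "lfun H f \<Longrightarrow> bar H (bar H f) = f"
  by (rule lfun_eqI_prj) (simp_all add: bar_lfun bar_prj)

lemma bar_conv: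
  assumes f: "lfun H f" and g: "lfun H g"
  shows "bar H (conv H f g) = conv H (bar H f) (bar H g)"
proof (rule lfun_eqI_prj[OF bar_lfun[OF conv_lfun[OF f g]] conv_lfun[OF bar_lfun[OF f] bar_lfun[OF g]]])
  fix n x
  have f_bar: "bar H f \<circ> prj H p = (\<lambda>a. (-1) ^ p * (f \<circ> prj H p) a)"
    and g_bar: "bar H g \<circ> prj H p = (\<lambda>a. (-1) ^ p * (g \<circ> prj H p) a)" for p
    by (auto simp: bar_prj f g)
  have "conv H (bar H f) (bar H g) (prj H n x) = (\<Sum>p\<le>n.
      (-1) ^ p * ((-1) ^ (n - p) * tpair (f \<circ> prj H p) (g \<circ> prj H (n - p)) (cop H (prj H n x))))"
    unfolding conv_def tpair_cop_prj[OF bar_lfun[OF f] bar_lfun[OF g]] f_bar g_bar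
      tpair_mult_left tpair_mult_right ..
  also have "\<dots> = (\<Sum>p\<le>n. (-1) ^ n * tpair (f \<circ> prj H p) (g \<circ> prj H (n - p)) (cop H (prj H n x)))"
    by (rule sum.cong[OF refl]) (simp add: mult.assoc[symmetric] power_add[symmetric])
  also have "\<dots> = bar H (conv H f g) (prj H n x)"
    by (simp add: bar_prj conv_lfun f g conv_def tpair_cop_prj[OF f g] sum_distrib_left)
  finally show "bar H (conv H f g) (prj H n x) = conv H (bar H f) (bar H g) (prj H n x)" ..
qed

lemma bar_cou: "bar H (cou H) = cou H"
proof (rule lfun_eqI_prj[OF bar_lfun[OF cou_lfun] cou_lfun])
  fix n x
  show "bar H (cou H) (prj H n x) = cou H (prj H n x)"
    using cou_homog[OF homog_prj, of n x] by (cases n) (simp_all add: bar_prj cou_lfun)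
qed

end

subsection \<open>Bilinear forms and characters\<close>

definition bilin :: "('k::field, 'h::ab_group_add) hopf \<Rightarrow> ('h \<Rightarrow> 'h \<Rightarrow> 'k) \<Rightarrow> bool" where
  "bilin H B \<longleftrightarrow> (\<forall>y. lfun H (\<lambda>x. B x y)) \<and> (\<forall>x. lfun H (B x))"

text \<open>Convolution of bilinear forms, i.e. of functionals on \<open>H \<otimes> H\<close>, whose coproduct is
  \<open>(1 \<otimes> \<tau> \<otimes> 1) \<circ> (\<Delta> \<otimes> \<Delta>)\<close>.\<close>
definition conv2 :: "('k::comm_ring_1, 'h) hopf \<Rightarrow> ('h \<Rightarrow> 'h \<Rightarrow> 'k) \<Rightarrow> ('h \<Rightarrow> 'h \<Rightarrow> 'k) \<Rightarrow> 'h \<Rightarrow> 'h \<Rightarrow> 'k" where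
  "conv2 H B C x y = sum_list (map (\<lambda>(a, b). sum_list (map (\<lambda>(c, d). B a c * C b d) (cop H y))) (cop H x))"

definition conv2_component ::
  "('k::comm_ring_1, 'h) hopf \<Rightarrow> ('h \<Rightarrow> 'h \<Rightarrow> 'k) \<Rightarrow> ('h \<Rightarrow> 'h \<Rightarrow> 'k) \<Rightarrow> nat \<Rightarrow> nat \<Rightarrow> 'h \<Rightarrow> 'h \<Rightarrow>
    nat \<Rightarrow> nat \<Rightarrow> 'k" where
  "conv2_component H B C p q x y i j =
     conv2 H (\<lambda>a c. B (prj H i a) (prj H j c)) (\<lambda>b d. C (prj H (p - i) b) (prj H (q - j) d))
       (prj H p x) (prj H q y)"

text \<open>The terms of the graded expansion of \<open>conv2 H B C (prj H p x) (prj H q y)\<close> other than the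
  two in which one factor sees only degree \<open>0\<close>; they involve \<open>B\<close> and \<open>C\<close> only in total
  degree below \<open>p + q\<close>.\<close>
definition conv2_mid ::
  "('k::comm_ring_1, 'h) hopf \<Rightarrow> ('h \<Rightarrow> 'h \<Rightarrow> 'k) \<Rightarrow> ('h \<Rightarrow> 'h \<Rightarrow> 'k) \<Rightarrow> nat \<Rightarrow> nat \<Rightarrow> 'h \<Rightarrow> 'h \<Rightarrow> 'k" where
  "conv2_mid H B C p q x y =
     (\<Sum>(i, j)\<in>{..p} \<times> {..q} - {(0, 0), (p, q)}. conv2_component H B C p q x y i j)"

lemma conv2_eq_sum_tpair_right:
  "conv2 H B C x y = sum_list (map (\<lambda>(a, b). tpair (B a) (C b) (cop H y)) (cop H x))"
  by (simp add: conv2_def tpair_def)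

lemma conv2_eq_sum_tpair_left:
  "conv2 H B C x y = sum_list (map (\<lambda>(c, d). tpair (\<lambda>a. B a c) (\<lambda>b. C b d) (cop H x)) (cop H y))"
  unfolding conv2_def tpair_def by (rule sum_list_map_swap)

lemma conv2_mult_left: "conv2 H (\<lambda>a c. k * B a c) C x y = k * conv2 H B C x y"
  by (simp add: conv2_eq_sum_tpair_right tpair_mult_left split_def sum_list_const_mult)

lemma conv2_mult_right: "conv2 H B (\<lambda>b d. k * C b d) x y = k * conv2 H B C x y"
  by (simp add: conv2_eq_sum_tpair_right tpair_mult_right split_def sum_list_const_mult)

lemma conv2_tensor:
  "conv2 H (\<lambda>x y. f x * f' y) (\<lambda>x y. g x * g' y) x y = conv H f g x * conv H f' g' y"
proof -
  have "conv2 H (\<lambda>x y. f x * f' y) (\<lambda>x y. g x * g' y) x y =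
    sum_list (map (\<lambda>(a, b). sum_list (map (\<lambda>(c, d). (f a * g b) * (f' c * g' d)) (cop H y))) (cop H x))"
    unfolding conv2_def by (simp add: mult_ac)
  also have "\<dots> = conv H f g x * conv H f' g' y"
    unfolding sum_list_map_mult_sum_list conv_def tpair_def ..
  finally show ?thesis .
qed

context gc_hopf
begin


lemma bilin_lfun_left: "bilin H B \<Longrightarrow> lfun H (\<lambda>x. B x y)"
  by (simp add: bilin_def)

lemma bilin_lfun_right: "bilin H B \<Longrightarrow> lfun H (B x)"
  by (simp add: bilin_def)

lemma bilin_prod: "lfun H f \<Longrightarrow> lfun H g \<Longrightarrow> bilin H (\<lambda>x y. f x * g y)"
  unfolding bilin_def by (auto intro: lfun_mult_const lfun_const_mult)

lemma bilin_mlt: "lfun H f \<Longrightarrow> bilin H (\<lambda>x y. f (mlt H x y))"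
  unfolding bilin_def by (auto intro: lfun_left_mult lfun_right_mult)

lemma bilin_prj_left: "bilin H B \<Longrightarrow> bilin H (\<lambda>a c. B (prj H i a) c)"
  unfolding bilin_def using lfun_comp[OF _ prj_linear] by (auto simp: comp_def)

lemma bilin_prj: "bilin H B \<Longrightarrow> bilin H (\<lambda>a c. B (prj H i a) (prj H j c))"
  unfolding bilin_def using lfun_comp[OF _ prj_linear] by (auto simp: comp_def)

lemma bilin_prj_0:
  assumes B: "bilin H B"
  shows "B (prj H 0 a) (prj H 0 c) = B (one H) (one H) * (cou H a * cou H c)"
proof -
  have "B (prj H 0 a) (prj H 0 c) = B (scl H (cou H a) (one H)) (scl H (cou H c) (one H))"
    by (simp add: prj_0)
  also have "\<dots> = cou H a * (cou H c * B (one H) (one H))"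
    using lfun_scale[OF bilin_lfun_left[OF B]] lfun_scale[OF bilin_lfun_right[OF B]] by simp
  finally show ?thesis by (simp add: mult_ac)
qed

lemma bilin_eqI_prj:
  assumes B: "bilin H B" and C: "bilin H C"
    and eq: "\<And>p q x y. B (prj H p x) (prj H q y) = C (prj H p x) (prj H q y)"
  shows "B = C"
proof -
  have "B (prj H p x) = C (prj H p x)" for p x
    by (rule lfun_eqI_prj[OF bilin_lfun_right[OF B] bilin_lfun_right[OF C]]) (rule eq)
  then have "(\<lambda>x. B x y) = (\<lambda>x. C x y)" for y
    by (intro lfun_eqI_prj[OF bilin_lfun_left[OF B] bilin_lfun_left[OF C]]) simp
  then show ?thesis by (simp add: fun_eq_iff)
qed

lemma bilin_eq_degree_induct:
  assumes B: "bilin H B" and C: "bilin H C" and one: "B (one H) (one H) = C (one H) (one H)"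
    and step: "\<And>p q x y. 0 < p + q \<Longrightarrow>
      (\<And>i j a c. i + j < p + q \<Longrightarrow> B (prj H i a) (prj H j c) = C (prj H i a) (prj H j c)) \<Longrightarrow>
      B (prj H p x) (prj H q y) = C (prj H p x) (prj H q y)"
  shows "B = C"
proof (rule bilin_eqI_prj[OF B C])
  have "B (prj H p x) (prj H q y) = C (prj H p x) (prj H q y)" if "p + q = n" for n p q x y
    using that
  proof (induction n arbitrary: p q x y rule: less_induct)
    case (less n)
    show ?case
    proof (cases "p + q = 0")
      case True
      then have "p = 0" and "q = 0" by simp_all
      then show ?thesis by (simp only: bilin_prj_0[OF B] bilin_prj_0[OF C] one)
    next
      case False
      show ?thesis
      proof (rule step)
        show "0 < p + q" using False by simp
        show "B (prj H i a) (prj H j c) = C (prj H i a) (prj H j c)" if "i + j < p + q" for i j a c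
          using less.IH[of "i + j" i j a c] less.prems that by simp
      qed
    qed
  qed
  then show "B (prj H p x) (prj H q y) = C (prj H p x) (prj H q y)" for p q x y by blast
qed

lemma conv2_prj_left:
  assumes B: "bilin H B" and C: "bilin H C"
  shows "conv2 H B C (prj H p x) y =
    (\<Sum>i\<le>p. conv2 H (\<lambda>a c. B (prj H i a) c) (\<lambda>b d. C (prj H (p - i) b) d) (prj H p x) y)"
proof -
  have "conv2 H B C (prj H p x) y = sum_list (map (\<lambda>(c, d). \<Sum>i\<le>p.
      tpair (\<lambda>a. B (prj H i a) c) (\<lambda>b. C (prj H (p - i) b) d) (cop H (prj H p x))) (cop H y))"
    unfolding conv2_eq_sum_tpair_left
    using tpair_cop_prj[OF bilin_lfun_left[OF B] bilin_lfun_left[OF C]] by (simp add: comp_def)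
  then show ?thesis by (simp only: sum_list_map_sum conv2_eq_sum_tpair_left)
qed

lemma conv2_prj_right:
  assumes B: "bilin H B" and C: "bilin H C"
  shows "conv2 H B C x (prj H q y) =
    (\<Sum>j\<le>q. conv2 H (\<lambda>a c. B a (prj H j c)) (\<lambda>b d. C b (prj H (q - j) d)) x (prj H q y))"
proof -
  have "conv2 H B C x (prj H q y) = sum_list (map (\<lambda>(a, b). \<Sum>j\<le>q.
      tpair (\<lambda>c. B a (prj H j c)) (\<lambda>d. C b (prj H (q - j) d)) (cop H (prj H q y))) (cop H x))"
    unfolding conv2_eq_sum_tpair_right
    using tpair_cop_prj[OF bilin_lfun_right[OF B] bilin_lfun_right[OF C]] by (simp add: comp_def)
  then show ?thesis by (simp only: sum_list_map_sum conv2_eq_sum_tpair_right)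
qed

lemma conv2_prj:
  assumes B: "bilin H B" and C: "bilin H C"
  shows "conv2 H B C (prj H p x) (prj H q y) = (\<Sum>i\<le>p. \<Sum>j\<le>q. conv2_component H B C p q x y i j)"
  unfolding conv2_prj_left[OF B C] conv2_component_def
  by (rule sum.cong[OF refl], rule conv2_prj_right[OF bilin_prj_left[OF B] bilin_prj_left[OF C]])

lemma conv2_cou_left:
  assumes C: "bilin H C"
  shows "conv2 H (\<lambda>a c. cou H a * cou H c) C x y = C x y"
proof -
  have "conv2 H (\<lambda>a c. cou H a * cou H c) C x y = sum_list (map (\<lambda>(a, b). cou H a * C b y) (cop H x))"
    by (simp add: conv2_eq_sum_tpair_right tpair_mult_left tpair_cou_left[OF bilin_lfun_right[OF C]])
  also have "\<dots> = C x y"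
    using tpair_cou_left[OF bilin_lfun_left[OF C]] by (simp add: tpair_def)
  finally show ?thesis .
qed

lemma conv2_cou_right:
  assumes B: "bilin H B"
  shows "conv2 H B (\<lambda>b d. cou H b * cou H d) x y = B x y"
proof -
  have "conv2 H B (\<lambda>b d. cou H b * cou H d) x y = sum_list (map (\<lambda>(a, b). B a y * cou H b) (cop H x))"
    by (simp add: conv2_eq_sum_tpair_right tpair_mult_right tpair_cou_right[OF bilin_lfun_right[OF B]]
        mult.commute)
  also have "\<dots> = B x y"
    using tpair_cou_right[OF bilin_lfun_left[OF B]] by (simp add: tpair_def)
  finally show ?thesis .
qed

lemma conv2_prj_split:
  assumes B: "bilin H B" and C: "bilin H C" and pq: "0 < p + q"
  shows "conv2 H B C (prj H p x) (prj H q y) = B (one H) (one H) * C (prj H p x) (prj H q y)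
    + B (prj H p x) (prj H q y) * C (one H) (one H) + conv2_mid H B C p q x y"
proof -
  let ?S = "conv2_component H B C p q x y" and ?R = "{..p} \<times> {..q} - {(0, 0), (p, q)}"
  have R: "insert (0, 0) (insert (p, q) ?R) = {..p} \<times> {..q}" and "(0, 0) \<notin> insert (p, q) ?R"
    using pq by auto
  have "conv2 H B C (prj H p x) (prj H q y) = (\<Sum>(i, j)\<in>{..p} \<times> {..q}. ?S i j)"
    by (simp add: conv2_prj[OF B C] sum.cartesian_product)
  also have "\<dots> = (\<Sum>(i, j)\<in>insert (0, 0) (insert (p, q) ?R). ?S i j)"
    by (simp only: R)
  also have "\<dots> = ?S 0 0 + ?S p q + conv2_mid H B C p q x y"
    using \<open>(0, 0) \<notin> insert (p, q) ?R\<close> by (simp add: conv2_mid_def add.assoc)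
  also have "?S 0 0 = B (one H) (one H) * C (prj H p x) (prj H q y)"
    by (simp add: conv2_component_def bilin_prj_0[OF B] conv2_mult_left
        conv2_cou_left[OF bilin_prj[OF C]])
  also have "?S p q = B (prj H p x) (prj H q y) * C (one H) (one H)"
    by (simp add: conv2_component_def bilin_prj_0[OF C] conv2_mult_right
        conv2_cou_right[OF bilin_prj[OF B]] mult.commute)
  finally show ?thesis .
qed

lemma conv2_mid_cong:
  assumes "\<And>i j a c. i + j < p + q \<Longrightarrow> B (prj H i a) (prj H j c) = B' (prj H i a) (prj H j c)"
    and "\<And>i j a c. i + j < p + q \<Longrightarrow> C (prj H i a) (prj H j c) = C' (prj H i a) (prj H j c)"
  shows "conv2_mid H B C p q x y = conv2_mid H B' C' p q x y"
  unfolding conv2_mid_def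
proof (rule sum.cong[OF refl])
  fix ij
  assume ij: "ij \<in> {..p} \<times> {..q} - {(0, 0), (p, q)}"
  obtain i j where ij_eq: "ij = (i, j)" by fastforce
  have "i \<le> p" "j \<le> q" "i \<noteq> 0 \<or> j \<noteq> 0" "i \<noteq> p \<or> j \<noteq> q"
    using ij ij_eq by auto
  then have "i + j < p + q" and "(p - i) + (q - j) < p + q"
    by linarith+
  then show "(case ij of (i, j) \<Rightarrow> conv2_component H B C p q x y i j) =
      (case ij of (i, j) \<Rightarrow> conv2_component H B' C' p q x y i j)"
    using assms by (simp add: ij_eq conv2_component_def)
qed

lemma conv2_cancel_left:
  assumes D: "bilin H D" and B: "bilin H B" and C: "bilin H C"
    and D1: "D (one H) (one H) = 1" and BC1: "B (one H) (one H) = C (one H) (one H)"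
    and eq: "\<And>x y. conv2 H D B x y = conv2 H D C x y"
  shows "B = C"
proof (rule bilin_eq_degree_induct[OF B C BC1])
  fix p q x y
  assume pq: "0 < p + q"
    and IH: "\<And>i j a c. i + j < p + q \<Longrightarrow> B (prj H i a) (prj H j c) = C (prj H i a) (prj H j c)"
  have "conv2_mid H D B p q x y = conv2_mid H D C p q x y"
    by (rule conv2_mid_cong) (simp_all add: IH)
  then show "B (prj H p x) (prj H q y) = C (prj H p x) (prj H q y)"
    using eq[of "prj H p x" "prj H q y"] D1 BC1
    unfolding conv2_prj_split[OF D B pq] conv2_prj_split[OF D C pq] by simp
qed

lemma conv2_square_unique:
  assumes two: "(2::'k) \<noteq> 0" and B: "bilin H B" and C: "bilin H C"
    and B1: "B (one H) (one H) = 1" and C1: "C (one H) (one H) = 1"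
    and eq: "\<And>x y. conv2 H B B x y = conv2 H C C x y"
  shows "B = C"
proof (rule bilin_eq_degree_induct[OF B C])
  show "B (one H) (one H) = C (one H) (one H)" using B1 C1 by simp
  fix p q x y
  assume pq: "0 < p + q"
    and IH: "\<And>i j a c. i + j < p + q \<Longrightarrow> B (prj H i a) (prj H j c) = C (prj H i a) (prj H j c)"
  have "conv2_mid H B B p q x y = conv2_mid H C C p q x y"
    by (rule conv2_mid_cong) (simp_all add: IH)
  then have "2 * B (prj H p x) (prj H q y) = 2 * C (prj H p x) (prj H q y)"
    using eq[of "prj H p x" "prj H q y"] B1 C1
    unfolding conv2_prj_split[OF B B pq] conv2_prj_split[OF C C pq] by simp
  then show "B (prj H p x) (prj H q y) = C (prj H p x) (prj H q y)" using two by simp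
qed

lemma conv2_mlt:
  "lfun H f \<Longrightarrow> lfun H g \<Longrightarrow>
    conv2 H (\<lambda>x y. f (mlt H x y)) (\<lambda>x y. g (mlt H x y)) x y = conv H f g (mlt H x y)"
  unfolding conv2_def conv_def by (rule cop_mlt[symmetric])

lemma conv_square_unique:
  assumes two: "(2::'k) \<noteq> 0" and f: "lfun H f" and g: "lfun H g"
    and f1: "f (one H) = 1" and g1: "g (one H) = 1" and eq: "conv H f f = conv H g g"
  shows "f = g"
proof -
  have "(\<lambda>x y. f x * cou H y) = (\<lambda>x y. g x * cou H y)"
  proof (rule conv2_square_unique[OF two bilin_prod[OF f cou_lfun] bilin_prod[OF g cou_lfun]])
    show "f (one H) * cou H (one H) = 1" and "g (one H) * cou H (one H) = 1"
      by (simp_all only: f1 g1 cou_one mult_1_left)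
    show "conv2 H (\<lambda>x y. f x * cou H y) (\<lambda>x y. f x * cou H y) x y =
        conv2 H (\<lambda>x y. g x * cou H y) (\<lambda>x y. g x * cou H y) x y" for x y
      by (simp only: conv2_tensor eq)
  qed
  then have "f x * cou H (one H) = g x * cou H (one H)" for x
    by (rule fun_cong[OF fun_cong])
  then show ?thesis by (simp add: fun_eq_iff cou_one)
qed

lemma bar_character:
  assumes f: "character H f"
  shows "character H (bar H f)"
proof -
  have lf: "lfun H f" by (rule character_lfun[OF f])
  have "(\<lambda>x y. bar H f (mlt H x y)) = (\<lambda>x y. bar H f x * bar H f y)"
  proof (rule bilin_eqI_prj[OF bilin_mlt[OF bar_lfun[OF lf]] bilin_prod[OF bar_lfun[OF lf] bar_lfun[OF lf]]])
    fix p q x y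
    show "bar H f (mlt H (prj H p x) (prj H q y)) = bar H f (prj H p x) * bar H f (prj H q y)"
      by (simp add: bar_homog[OF lf homog_mlt[OF homog_prj homog_prj]] bar_prj[OF lf]
          character_mlt[OF f] power_add mult_ac)
  qed
  moreover have "bar H f (one H) = 1"
    using bar_homog[OF lf homog_one] character_one[OF f] by simp
  ultimately show ?thesis
    using bar_lfun[OF lf] by (simp add: character_def fun_eq_iff)
qed

text \<open>Both sides, as bilinear forms, are right inverses of \<open>f \<circ> mlt H = f \<otimes> f\<close> under \<open>conv2\<close>.\<close>
lemma character_comp_ant:
  assumes f: "character H f"
  shows "character H (f \<circ> ant H)"
proof -
  have lf: "lfun H f" and li: "lfun H (f \<circ> ant H)"
    using character_lfun[OF f] lfun_comp_ant by auto
  have i1: "(f \<circ> ant H) (one H) = 1"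
    using character_ant_one[OF f] by simp
  have "(\<lambda>x y. (f \<circ> ant H) (mlt H x y)) = (\<lambda>x y. (f \<circ> ant H) x * (f \<circ> ant H) y)"
  proof (rule conv2_cancel_left[OF bilin_prod[OF lf lf] bilin_mlt[OF li] bilin_prod[OF li li]])
    show "f (one H) * f (one H) = 1"
      using character_one[OF f] by simp
    show "(f \<circ> ant H) (mlt H (one H) (one H)) = (f \<circ> ant H) (one H) * (f \<circ> ant H) (one H)"
      using i1 by (simp only: one_mlt mult_1_left)
    fix x y
    have "conv2 H (\<lambda>x y. f x * f y) (\<lambda>x y. (f \<circ> ant H) (mlt H x y)) x y =
        conv2 H (\<lambda>x y. f (mlt H x y)) (\<lambda>x y. (f \<circ> ant H) (mlt H x y)) x y"
      by (simp only: character_mlt[OF f])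
    also have "\<dots> = cou H x * cou H y"
      by (simp only: conv2_mlt[OF lf li] conv_ant_right[OF f] cou_mlt)
    also have "\<dots> = conv2 H (\<lambda>x y. f x * f y) (\<lambda>x y. (f \<circ> ant H) x * (f \<circ> ant H) y) x y"
      by (simp only: conv2_tensor conv_ant_right[OF f])
    finally show "conv2 H (\<lambda>x y. f x * f y) (\<lambda>x y. (f \<circ> ant H) (mlt H x y)) x y =
        conv2 H (\<lambda>x y. f x * f y) (\<lambda>x y. (f \<circ> ant H) x * (f \<circ> ant H) y) x y" .
  qed
  then show ?thesis
    using li i1 by (simp add: character_def fun_eq_iff)
qed

lemma bar_comp_ant:
  assumes g: "character H g"
  shows "bar H (g \<circ> ant H) = bar H g \<circ> ant H"
proof (rule conv_inverse_unique)
  have lg: "lfun H g" by (rule character_lfun[OF g])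
  show "lfun H (bar H g)" and "lfun H (bar H (g \<circ> ant H))" and "lfun H (bar H g \<circ> ant H)"
    by (simp_all add: bar_lfun lfun_comp_ant lg)
  show "conv H (bar H g) (bar H (g \<circ> ant H)) = cou H"
    using bar_conv[OF lg lfun_comp_ant[OF lg]] conv_ant_right[OF g] bar_cou by simp
  show "conv H (bar H g \<circ> ant H) (bar H g) = cou H"
    by (rule conv_ant_left[OF bar_character[OF g]])
qed

lemma odd_fun_iff_bar_eq:
  assumes m: "character H m"
  shows "odd_fun H m \<longleftrightarrow> bar H m = m \<circ> ant H"
proof
  have lm: "lfun H m" by (rule character_lfun[OF m])
  assume "odd_fun H m"
  then show "bar H m = m \<circ> ant H"
    using conv_inverse_unique[OF lm bar_lfun[OF lm] lfun_comp_ant[OF lm]] conv_ant_left[OF m]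
    by (simp add: odd_fun_def)
next
  assume "bar H m = m \<circ> ant H"
  then show "odd_fun H m"
    using conv_ant_right[OF m] conv_ant_left[OF m] by (simp add: odd_fun_def)
qed

end

subsection \<open>Square roots of characters\<close>

text \<open>Newton's iteration for a convolution square root of \<open>\<chi>\<close>: the step to \<open>Suc n\<close> adds half
  the defect \<open>\<chi> - r * r\<close> in degree \<open>Suc n\<close>, which removes that defect because \<open>r\<close> is \<open>1\<close> at
  \<open>one H\<close>, and changes nothing in lower degrees.\<close>
fun conv_sqrt_approx :: "('k::field, 'h::ab_group_add) hopf \<Rightarrow> ('h \<Rightarrow> 'k) \<Rightarrow> nat \<Rightarrow> 'h \<Rightarrow> 'k" where
  "conv_sqrt_approx H \<chi> 0 = cou H"
| "conv_sqrt_approx H \<chi> (Suc n) = (\<lambda>x. conv_sqrt_approx H \<chi> n x + inverse 2 *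
     (\<chi> (prj H (Suc n) x) - conv H (conv_sqrt_approx H \<chi> n) (conv_sqrt_approx H \<chi> n) (prj H (Suc n) x)))"

definition conv_sqrt :: "('k::field, 'h::ab_group_add) hopf \<Rightarrow> ('h \<Rightarrow> 'k) \<Rightarrow> 'h \<Rightarrow> 'k" where
  "conv_sqrt H \<chi> = graded_sum H (conv_sqrt_approx H \<chi>)"

context gc_hopf
begin


lemma conv_sqrt_approx_lfun:
  assumes \<chi>: "lfun H \<chi>"
  shows "lfun H (conv_sqrt_approx H \<chi> n)"
proof (induction n)
  case 0
  then show ?case by (simp add: cou_lfun)
next
  case (Suc n)
  let ?r = "conv_sqrt_approx H \<chi> n"
  have "lfun H (\<lambda>x. \<chi> (prj H (Suc n) x) - conv H ?r ?r (prj H (Suc n) x))"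
    using lfun_comp_prj[OF \<chi>] lfun_comp_prj[OF conv_lfun[OF Suc.IH Suc.IH]]
    by (intro lfun_minus) (simp_all add: comp_def)
  from lfun_plus[OF Suc.IH lfun_const_mult[OF this]] show ?case
    by (simp only: conv_sqrt_approx.simps)
qed

lemma conv_sqrt_approx_prj_above:
  assumes \<chi>: "lfun H \<chi>" and "n < k"
  shows "conv_sqrt_approx H \<chi> n (prj H k x) = 0"
  using assms(2)
proof (induction n)
  case 0
  then show ?case using cou_homog[OF homog_prj, of k x] by simp
next
  case (Suc n)
  then show ?case
    using lfun_zero[OF \<chi>] lfun_zero[OF conv_lfun[OF conv_sqrt_approx_lfun[OF \<chi>] conv_sqrt_approx_lfun[OF \<chi>]]]
    by (simp add: prj_prj)
qed

lemma conv_sqrt_approx_prj_stable: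
  assumes \<chi>: "lfun H \<chi>" and "k \<le> n"
  shows "conv_sqrt_approx H \<chi> n (prj H k x) = conv_sqrt_approx H \<chi> k (prj H k x)"
  using assms(2)
proof (induction n rule: dec_induct)
  case base
  then show ?case by simp
next
  case (step n)
  then show ?case
    using lfun_zero[OF \<chi>] lfun_zero[OF conv_lfun[OF conv_sqrt_approx_lfun[OF \<chi>] conv_sqrt_approx_lfun[OF \<chi>]]]
    by (simp add: prj_prj)
qed

lemma conv_sqrt_lfun: "lfun H \<chi> \<Longrightarrow> lfun H (conv_sqrt H \<chi>)"
  unfolding conv_sqrt_def by (rule graded_sum_lfun[OF conv_sqrt_approx_lfun])

lemma conv_sqrt_prj: "lfun H \<chi> \<Longrightarrow> conv_sqrt H \<chi> (prj H n x) = conv_sqrt_approx H \<chi> n (prj H n x)"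
  unfolding conv_sqrt_def by (rule graded_sum_prj[OF conv_sqrt_approx_lfun])

lemma conv_sqrt_one: "lfun H \<chi> \<Longrightarrow> conv_sqrt H \<chi> (one H) = 1"
  using conv_sqrt_prj[of \<chi> 0 "one H"] homog_one cou_one by (simp add: homog_def)

lemma conv_sqrt_square:
  assumes two: "(2::'k) \<noteq> 0" and \<chi>: "lfun H \<chi>" and \<chi>1: "\<chi> (one H) = 1"
  shows "conv H (conv_sqrt H \<chi>) (conv_sqrt H \<chi>) = \<chi>"
proof (rule lfun_eqI_prj[OF conv_lfun[OF conv_sqrt_lfun[OF \<chi>] conv_sqrt_lfun[OF \<chi>]] \<chi>])
  let ?r = "conv_sqrt H \<chi>"
  have r: "lfun H ?r" by (rule conv_sqrt_lfun[OF \<chi>])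
  fix N x
  show "conv H ?r ?r (prj H N x) = \<chi> (prj H N x)"
  proof (cases N)
    case 0
    then show ?thesis
      by (simp add: lfun_prj_0[OF conv_lfun[OF r r]] lfun_prj_0[OF \<chi>] conv_one[OF r r]
          conv_sqrt_one[OF \<chi>] \<chi>1)
  next
    case (Suc m)
    let ?s = "conv_sqrt_approx H \<chi> m" and ?y = "prj H N x"
    let ?mid = "\<lambda>f. \<Sum>p\<in>{0<..<N}. tpair (f \<circ> prj H p) (f \<circ> prj H (N - p)) (cop H ?y)"
    have s: "lfun H ?s" by (rule conv_sqrt_approx_lfun[OF \<chi>])
    have "?r \<circ> prj H p = ?s \<circ> prj H p" if "0 < p" and "p < N" for p
    proof
      fix z
      have "p \<le> m" using that Suc by simp
      then show "(?r \<circ> prj H p) z = (?s \<circ> prj H p) z"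
        using conv_sqrt_prj[OF \<chi>, of p z] conv_sqrt_approx_prj_stable[OF \<chi>, of p m z] by simp
    qed
    then have mid: "?mid ?r = ?mid ?s"
      by (intro sum.cong[OF refl]) simp
    have s_y: "?s ?y = 0"
      by (rule conv_sqrt_approx_prj_above[OF \<chi>]) (simp add: Suc)
    have "?r ?y = inverse 2 * (\<chi> ?y - ?mid ?s)"
      using conv_sqrt_prj[OF \<chi>, of N x] tpair_cop_prj_split[OF s s, of N x] s_y Suc
      by (simp add: conv_def)
    moreover have "conv H ?r ?r ?y = ?r ?y + ?r ?y + ?mid ?r"
      using tpair_cop_prj_split[OF r r, of N x] Suc by (simp add: conv_def conv_sqrt_one[OF \<chi>])
    ultimately show ?thesis
      using mid two by (simp add: field_simps)
  qed
qed

lemma character_conv_sqrt: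
  assumes two: "(2::'k) \<noteq> 0" and \<chi>: "character H \<chi>"
  shows "character H (conv_sqrt H \<chi>)"
proof -
  let ?r = "conv_sqrt H \<chi>"
  have r: "lfun H ?r" and r1: "?r (one H) = 1"
    using conv_sqrt_lfun conv_sqrt_one character_lfun[OF \<chi>] by auto
  have sq: "conv H ?r ?r = \<chi>"
    by (rule conv_sqrt_square[OF two character_lfun[OF \<chi>] character_one[OF \<chi>]])
  have "(\<lambda>x y. ?r (mlt H x y)) = (\<lambda>x y. ?r x * ?r y)"
  proof (rule conv2_square_unique[OF two bilin_mlt[OF r] bilin_prod[OF r r]])
    show "?r (mlt H (one H) (one H)) = 1" and "?r (one H) * ?r (one H) = 1"
      using r1 by (simp_all add: one_mlt)
    show "conv2 H (\<lambda>x y. ?r (mlt H x y)) (\<lambda>x y. ?r (mlt H x y)) x y =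
        conv2 H (\<lambda>x y. ?r x * ?r y) (\<lambda>x y. ?r x * ?r y) x y" for x y
      by (simp only: conv2_mlt[OF r r] conv2_tensor sq character_mlt[OF \<chi>])
  qed
  then show ?thesis
    using r r1 by (simp add: character_def fun_eq_iff)
qed

subsection \<open>The even-odd factorization\<close>

lemma odd_fun_conv_bar_ant:
  assumes \<phi>: "character H \<phi>"
  shows "odd_fun H (conv H (bar H \<phi> \<circ> ant H) \<phi>)"
proof -
  have b: "character H (bar H \<phi>)" by (rule bar_character[OF \<phi>])
  note lfuns = character_lfun[OF \<phi>] character_lfun[OF b]
    lfun_comp_ant[OF character_lfun[OF \<phi>]] lfun_comp_ant[OF character_lfun[OF b]]
  have "bar H (conv H (bar H \<phi> \<circ> ant H) \<phi>) = conv H (\<phi> \<circ> ant H) (bar H \<phi>)"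
    by (simp add: bar_conv lfuns bar_comp_ant[OF b] bar_bar)
  then show ?thesis
    by (simp add: odd_fun_def conv_assoc lfuns conv_lfun conv_conv_ant_cancel \<phi> b conv_ant_left)
qed

lemma odd_fun_of_conv_square:
  assumes two: "(2::'k) \<noteq> 0" and \<chi>: "character H \<chi>" "odd_fun H \<chi>"
    and m: "character H m" and sq: "conv H m m = \<chi>"
  shows "odd_fun H m"
proof -
  have lm: "lfun H m" and li: "lfun H (m \<circ> ant H)"
    using character_lfun[OF m] lfun_comp_ant by auto
  have "conv H (m \<circ> ant H) (m \<circ> ant H) = \<chi> \<circ> ant H"
  proof (rule conv_inverse_unique[OF character_lfun[OF \<chi>(1)] conv_lfun[OF li li]])
    show "lfun H (\<chi> \<circ> ant H)" by (rule lfun_comp_ant[OF character_lfun[OF \<chi>(1)]])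
    show "conv H \<chi> (conv H (m \<circ> ant H) (m \<circ> ant H)) = cou H"
      unfolding sq[symmetric] by (simp add: conv_assoc lm li conv_lfun conv_conv_ant_cancel m conv_ant_right)
    show "conv H (\<chi> \<circ> ant H) \<chi> = cou H" by (rule conv_ant_left[OF \<chi>(1)])
  qed
  also have "\<dots> = bar H \<chi>"
    using \<chi> by (simp add: odd_fun_iff_bar_eq)
  also have "\<dots> = conv H (bar H m) (bar H m)"
    by (simp add: sq[symmetric] bar_conv lm)
  finally have "conv H (m \<circ> ant H) (m \<circ> ant H) = conv H (bar H m) (bar H m)" .
  then have "m \<circ> ant H = bar H m"
    using conv_square_unique[OF two li bar_lfun[OF lm]]
    by (simp add: character_ant_one[OF m] character_one[OF bar_character[OF m]])
  then show ?thesis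
    using m by (simp add: odd_fun_iff_bar_eq)
qed

lemma even_fun_conv_ant_sqrt:
  assumes \<phi>: "character H \<phi>" and m: "character H m" "odd_fun H m"
    and sq: "conv H m m = conv H (bar H \<phi> \<circ> ant H) \<phi>"
  shows "even_fun H (conv H \<phi> (m \<circ> ant H))"
proof -
  have l\<phi>: "lfun H \<phi>" and lm: "lfun H m" and lb: "lfun H (bar H \<phi>)"
    using character_lfun[OF \<phi>] character_lfun[OF m(1)] bar_lfun by auto
  have bar_m: "bar H m = m \<circ> ant H"
    using m by (simp add: odd_fun_iff_bar_eq)
  have "bar H (conv H \<phi> (m \<circ> ant H)) = conv H (bar H \<phi>) m"
    by (simp add: bar_conv l\<phi> bar_lfun lm bar_m[symmetric] bar_bar)
  also have "\<dots> = conv H (conv H (conv H (bar H \<phi>) m) m) (m \<circ> ant H)"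
    by (rule conv_conv_ant_cancel_right[OF m(1) conv_lfun[OF lb lm], symmetric])
  also have "\<dots> = conv H (conv H (bar H \<phi>) (conv H m m)) (m \<circ> ant H)"
    by (simp only: conv_assoc[OF lb lm lm])
  also have "\<dots> = conv H \<phi> (m \<circ> ant H)"
    unfolding sq conv_conv_ant_cancel[OF bar_character[OF \<phi>] l\<phi>] ..
  finally show ?thesis
    by (simp add: even_fun_def)
qed

lemma even_odd_factorization_exists:
  assumes two: "(2::'k) \<noteq> 0" and \<phi>: "character H \<phi>"
  obtains p m where "character H p" "even_fun H p" "character H m" "odd_fun H m" "\<phi> = conv H p m"
proof -
  define \<chi> where "\<chi> = conv H (bar H \<phi> \<circ> ant H) \<phi>"
  have \<chi>: "character H \<chi>" "odd_fun H \<chi>"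
    unfolding \<chi>_def using \<phi>
    by (simp_all add: conv_character character_comp_ant bar_character odd_fun_conv_bar_ant)
  define m where "m = conv_sqrt H \<chi>"
  have m: "character H m" and sq: "conv H m m = \<chi>"
    unfolding m_def using character_conv_sqrt[OF two \<chi>(1)]
      conv_sqrt_square[OF two character_lfun[OF \<chi>(1)] character_one[OF \<chi>(1)]] by auto
  have odd: "odd_fun H m"
    by (rule odd_fun_of_conv_square[OF two \<chi> m sq])
  have "even_fun H (conv H \<phi> (m \<circ> ant H))"
    by (rule even_fun_conv_ant_sqrt[OF \<phi> m odd]) (simp add: sq \<chi>_def)
  moreover have "character H (conv H \<phi> (m \<circ> ant H))"
    by (simp add: conv_character character_comp_ant \<phi> m)
  moreover have "\<phi> = conv H (conv H \<phi> (m \<circ> ant H)) m"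
    using \<phi> m by (simp add: conv_assoc character_lfun lfun_comp_ant conv_ant_left conv_cou_right)
  ultimately show ?thesis
    using that m odd by blast
qed

lemma odd_factor_conv_square:
  assumes p: "character H p" "even_fun H p" and m: "character H m" "odd_fun H m"
  shows "conv H m m = conv H (bar H (conv H p m) \<circ> ant H) (conv H p m)"
proof -
  let ?\<phi> = "conv H p m"
  have lp: "lfun H p" and lm: "lfun H m"
    using character_lfun p(1) m(1) by auto
  have bar_\<phi>: "bar H ?\<phi> = conv H p (m \<circ> ant H)"
    using p(2) m by (simp add: bar_conv lp lm even_fun_def odd_fun_iff_bar_eq)
  have "conv H (bar H ?\<phi>) (conv H m m) = ?\<phi>"
    unfolding bar_\<phi> by (simp add: conv_assoc lp lm lfun_comp_ant conv_lfun conv_ant_conv_cancel m)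
  then have "conv H (bar H ?\<phi> \<circ> ant H) ?\<phi> =
      conv H (bar H ?\<phi> \<circ> ant H) (conv H (bar H ?\<phi>) (conv H m m))"
    by simp
  also have "\<dots> = conv H m m"
    by (rule conv_ant_conv_cancel[OF bar_character[OF conv_character[OF p(1) m(1)]] conv_lfun[OF lm lm]])
  finally show ?thesis ..
qed

lemma even_odd_factorization_unique:
  assumes two: "(2::'k) \<noteq> 0"
    and p: "character H p" "even_fun H p" and m: "character H m" "odd_fun H m"
    and p': "character H p'" "even_fun H p'" and m': "character H m'" "odd_fun H m'"
    and eq: "conv H p m = conv H p' m'"
  shows "p = p'" and "m = m'"
proof -
  show "m = m'"
    by (rule conv_square_unique[OF two character_lfun[OF m(1)] character_lfun[OF m'(1)]
          character_one[OF m(1)] character_one[OF m'(1)]])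
       (simp add: odd_factor_conv_square[OF p m] odd_factor_conv_square[OF p' m'] eq)
  then show "p = p'"
    using conv_conv_ant_cancel_right[OF m(1) character_lfun[OF p(1)]]
      conv_conv_ant_cancel_right[OF m'(1) character_lfun[OF p'(1)]] eq
    by metis
qed

lemma even_odd_parts_eq:
  assumes two: "(2::'k) \<noteq> 0"
    and p: "character H p" "even_fun H p" and m: "character H m" "odd_fun H m"
  shows "even_part H (conv H p m) = p" and "odd_part H (conv H p m) = m"
proof -
  have uniq: "p' = p \<and> m' = m"
    if "character H p'" "even_fun H p'" "character H m'" "odd_fun H m'" "conv H p m = conv H p' m'"
    for p' m'
    using even_odd_factorization_unique[OF two p m that] by simp
  show "even_part H (conv H p m) = p"
    unfolding even_part_def using p m uniq by (intro the_equality) blast+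
  show "odd_part H (conv H p m) = m"
    unfolding odd_part_def using p m uniq by (intro the_equality) blast+
qed

end

locale gc_hopf_hom = H: gc_hopf H + K: gc_hopf K
  for H :: "('k::field, 'h::ab_group_add) hopf" and K :: "('k, 'g::ab_group_add) hopf" +
  fixes \<Phi> :: "'h \<Rightarrow> 'g"
  assumes graded_hopf_hom: "graded_hopf_hom H K \<Phi>"
begin

lemma
  hom_linear: "Vector_Spaces.linear (scl H) (scl K) \<Phi>" and
  hom_mlt: "\<Phi> (mlt H x y) = mlt K (\<Phi> x) (\<Phi> y)" and
  hom_one: "\<Phi> (one H) = one K" and
  hom_cop: "lfun K f \<Longrightarrow> lfun K g \<Longrightarrow> tpair f g (cop K (\<Phi> x)) = tpair (f \<circ> \<Phi>) (g \<circ> \<Phi>) (cop H x)" and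
  hom_cou: "cou K (\<Phi> x) = cou H x" and
  hom_prj: "prj K n (\<Phi> x) = \<Phi> (prj H n x)"
  using graded_hopf_hom unfolding graded_hopf_hom_def by (simp_all only:)

lemma lfun_comp_hom: "lfun K f \<Longrightarrow> lfun H (f \<circ> \<Phi>)"
  unfolding lfun_def by (rule Vector_Spaces.linear_compose[OF hom_linear])

lemma conv_comp_hom: "lfun K f \<Longrightarrow> lfun K g \<Longrightarrow> conv H (f \<circ> \<Phi>) (g \<circ> \<Phi>) = conv K f g \<circ> \<Phi>"
  by (simp add: fun_eq_iff conv_def hom_cop)

lemma cou_comp_hom: "cou K \<circ> \<Phi> = cou H"
  by (simp add: fun_eq_iff hom_cou)

lemma character_comp_hom: "character K f \<Longrightarrow> character H (f \<circ> \<Phi>)"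
  using lfun_comp_hom[of f] by (simp add: character_def hom_mlt hom_one)

lemma bar_comp_hom:
  assumes f: "lfun K f"
  shows "bar H (f \<circ> \<Phi>) = bar K f \<circ> \<Phi>"
proof (rule H.lfun_eqI_prj[OF H.bar_lfun[OF lfun_comp_hom[OF f]] lfun_comp_hom[OF K.bar_lfun[OF f]]])
  fix n x
  show "bar H (f \<circ> \<Phi>) (prj H n x) = (bar K f \<circ> \<Phi>) (prj H n x)"
    using K.bar_prj[OF f, of n "\<Phi> x"]
    by (simp add: H.bar_prj[OF lfun_comp_hom[OF f]] hom_prj)
qed

lemma even_fun_comp_hom: "lfun K f \<Longrightarrow> even_fun K f \<Longrightarrow> even_fun H (f \<circ> \<Phi>)"
  by (simp add: even_fun_def bar_comp_hom)

lemma odd_fun_comp_hom: "lfun K f \<Longrightarrow> odd_fun K f \<Longrightarrow> odd_fun H (f \<circ> \<Phi>)"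
  by (simp add: odd_fun_def bar_comp_hom conv_comp_hom K.bar_lfun cou_comp_hom)

end

theorem lemma2p2:
  fixes H :: "('k::field, 'h::ab_group_add) hopf"
    and K :: "('k, 'g::ab_group_add) hopf"
    and \<phi> :: "'h \<Rightarrow> 'k" and \<psi> :: "'g \<Rightarrow> 'k" and \<Phi> :: "'h \<Rightarrow> 'g"
  assumes "(2::'k) \<noteq> 0"
    and "graded_connected_hopf H" and "graded_connected_hopf K"
    and "character H \<phi>" and "character K \<psi>"
    and "graded_hopf_hom H K \<Phi>"
    and "\<psi> \<circ> \<Phi> = \<phi>"
  shows "even_part K \<psi> \<circ> \<Phi> = even_part H \<phi> \<and> odd_part K \<psi> \<circ> \<Phi> = odd_part H \<phi>"
proof -
  interpret gc_hopf_hom H K \<Phi>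
    by unfold_locales (fact assms(2,3,6))+
  obtain p m where p: "character K p" "even_fun K p" and m: "character K m" "odd_fun K m"
    and \<psi>: "\<psi> = conv K p m"
    using K.even_odd_factorization_exists[OF assms(1,5)] by blast
  have "\<phi> = conv H (p \<circ> \<Phi>) (m \<circ> \<Phi>)"
    using assms(7) \<psi> p m by (simp add: conv_comp_hom character_lfun)
  then have "even_part H \<phi> = p \<circ> \<Phi>" and "odd_part H \<phi> = m \<circ> \<Phi>"
    using H.even_odd_parts_eq[OF assms(1) character_comp_hom[OF p(1)]
        even_fun_comp_hom[OF character_lfun[OF p(1)] p(2)] character_comp_hom[OF m(1)]
        odd_fun_comp_hom[OF character_lfun[OF m(1)] m(2)]]
    by simp_all
  moreover have "even_part K \<psi> = p" and "odd_part K \<psi> = m"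
    unfolding \<psi> by (rule K.even_odd_parts_eq[OF assms(1) p m])+
  ultimately show ?thesis by simp
qed

end
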